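(* There is a compactly generated subgroup $H_0$ of $\mathbb Z^\omega$ such that for every compactly generated subgroup $H$ of $\mathbb Z^\omega$ there is a continuous group homomorphism $\varphi:\mathbb Z^\omega\to\mathbb Z^\omega$ with $\varphi^{-1}(H_0)=H$.
   Context: $\mathbb Z$ carries the discrete topology and $\mathbb Z^\omega$ the product topology. A subgroup is compactly generated if it is the subgroup generated by some compact set. *)

theory Defs
  imports "HOL-Analysis.Analysis" "HOL-Computational_Algebra.Group_Closure" "HOL-Library.Function_Algebras"
begin

text \<open>Z^omega is modelled as the type nat => int; int carries its standard (discrete)
  metric topology and the function type carries the product topology
  (HOL-Analysis Function_Topology). group_closure K is the subgroup generated by K.\<close>

definition compactly_generated :: "(nat \<Rightarrow> int) set \<Rightarrow> bool" where
  "compactly_generated H \<longleftrightarrow> (\<exists>K. compact K \<and> H = group_closure K)"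

end

theory Submission
  imports Defs
begin

text \<open>A compact set K \<subseteq> \<int>^\<omega> has finite coordinate projections, so for each m its set of
  truncations to the first m coordinates is one of countably many finite sets. The universal
  compact set U has a block of coordinates for every pair (m, c), in which its points are 0 or
  one of the finitely many sequences coded by c. The embedding attached to K copies the m-th
  truncation of x into block (m, c_m), where c_m codes the m-th truncations of K;
  it maps K into U, and projecting U onto block (m, c_m) lands in the m-th truncations of
  K together with 0. Hence if the image of x is a word of length N in U, every truncation of x
  is the truncation of a word of length N in K. These words converge to x, and words of
  bounded length in a compact set form a compact, hence closed, set.\<close>

instance discrete_topology < first_countable_topology
proof
  fix x :: 'a
  show "\<exists>A::nat \<Rightarrow> 'a set. (\<forall>i. x \<in> A i \<and> open (A i)) \<and>
      (\<forall>S. open S \<and> x \<in> S \<longrightarrow> (\<exists>i. A i \<subseteq> S))"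
    by (intro exI[of _ "\<lambda>_. {x}"]) (auto simp: open_discrete)
qed

instance int :: topological_ab_group_add
  by standard (simp_all add: nhds_discrete filterlim_principal eventually_principal)

lemma Hausdorff_space_euclidean_t2: "Hausdorff_space (euclidean :: 'a::t2_space topology)"
  unfolding Hausdorff_space_def disjnt_def by (metis hausdorff open_openin)

lemma compact_imp_closed_fun:
  fixes C :: "('i \<Rightarrow> 'a::t2_space) set"
  assumes "compact C"
  shows "closed C"
proof -
  have "Hausdorff_space (product_topology (\<lambda>i. euclidean :: 'a topology) UNIV)"
    by (simp add: Hausdorff_space_product_topology Hausdorff_space_euclidean_t2)
  moreover have "compactin (product_topology (\<lambda>i. euclidean) UNIV) C"
    using assms by (simp add: euclidean_product_topology)
  ultimately show ?thesis
    by (metis closed_closedin compactin_imp_closedin euclidean_product_topology)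
qed

lemma tendsto_nhds_if_continuous_on_UNIV:
  "continuous_on UNIV f \<Longrightarrow> (f \<longlongrightarrow> f x) (nhds x)"
  by (metis UNIV_I continuous_on_def tendsto_at_iff_tendsto_nhds)

instance "fun" :: (type, topological_ab_group_add) topological_ab_group_add
proof
  fix a b :: "'a \<Rightarrow> 'b"
  have "continuous_on UNIV (\<lambda>p :: ('a \<Rightarrow> 'b) \<times> ('a \<Rightarrow> 'b). fst p + snd p)"
    by (intro continuous_on_coordinatewise_then_product)
      (simp, intro continuous_intros continuous_on_product_then_coordinatewise)
  then show "((\<lambda>p. fst p + snd p) \<longlongrightarrow> a + b) (nhds a \<times>\<^sub>F nhds b)"
    using tendsto_nhds_if_continuous_on_UNIV[of _ "(a, b)"] by (fastforce simp: nhds_prod)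
  have "continuous_on UNIV (uminus :: ('a \<Rightarrow> 'b) \<Rightarrow> _)"
    by (intro continuous_on_coordinatewise_then_product)
      (simp, intro continuous_intros continuous_on_product_then_coordinatewise)
  then show "(uminus \<longlongrightarrow> - a) (nhds a)"
    using tendsto_nhds_if_continuous_on_UNIV by fastforce
qed

section \<open>Words of bounded length\<close>

fun bounded_words :: "nat \<Rightarrow> 'a::ab_group_add set \<Rightarrow> 'a set" where
  "bounded_words 0 A = {0}"
| "bounded_words (Suc N) A =
     {s + a - b |s a b. s \<in> bounded_words N A \<and> a \<in> insert 0 A \<and> b \<in> insert 0 A}"

lemma bounded_words_SucI:
  "s \<in> bounded_words N A \<Longrightarrow> a \<in> insert 0 A \<Longrightarrow> b \<in> insert 0 A \<Longrightarrow>
    s + a - b \<in> bounded_words (Suc N) A"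
  by auto

lemma bounded_words_subset_group_closure: "bounded_words N A \<subseteq> group_closure A"
  by (induction N) (auto intro: group_closure.intros group_closure_add)

lemma bounded_words_diff:
  assumes "s \<in> bounded_words N A" "t \<in> bounded_words M A"
  shows "s - t \<in> bounded_words (N + M) A"
  using assms(2)
proof (induction M arbitrary: t)
  case 0
  with assms(1) show ?case by simp
next
  case (Suc M)
  then obtain t' a b where t': "t' \<in> bounded_words M A" "a \<in> insert 0 A" "b \<in> insert 0 A"
    and t: "t = t' + a - b"
    by auto
  have "s - t = (s - t') + b - a" using t by (simp add: algebra_simps)
  moreover have "(s - t') + b - a \<in> bounded_words (Suc (N + M)) A"
    using Suc.IH[OF t'(1)] t'(3,2) by (rule bounded_words_SucI)
  ultimately show ?case by (simp only: add_Suc_right)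
qed

lemma group_closure_eq_UN_bounded_words: "group_closure A = (\<Union>N. bounded_words N A)"
proof (intro equalityI subsetI)
  fix x assume "x \<in> group_closure A"
  then show "x \<in> (\<Union>N. bounded_words N A)"
  proof induction
    case (base s)
    then have "0 + s - 0 \<in> bounded_words (Suc 0) A" by (intro bounded_words_SucI) simp_all
    then show ?case by (metis UN_I UNIV_I add_0 diff_zero)
  next
    case (diff s t)
    then show ?case using bounded_words_diff by blast
  qed
qed (use bounded_words_subset_group_closure in blast)

lemma bounded_words_mono:
  assumes "A \<subseteq> insert 0 B"
  shows "bounded_words N A \<subseteq> bounded_words N B"
proof (induction N)
  case (Suc N)
  have "insert 0 A \<subseteq> insert 0 B" using assms by blast
  with Suc show ?case by (simp only: bounded_words.simps) blast
qed simp

text \<open>The locale name \<open>additive\<close> of HOL.Modules is shadowed by \<open>Measure_Space.additive\<close>.\<close>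

lemma bounded_words_image:
  assumes "Modules.additive h"
  shows "bounded_words N (h ` A) = h ` bounded_words N A"
proof (induction N)
  case 0
  show ?case by (simp add: additive.zero[OF assms])
next
  case (Suc N)
  have ins: "insert 0 (h ` A) = h ` insert 0 A" by (simp add: additive.zero[OF assms])
  have hom: "h (s + a - b) = h s + h a - h b" for s a b
    by (simp add: additive.diff[OF assms] additive.add[OF assms])
  show ?case
  proof (intro equalityI subsetI)
    fix x assume "x \<in> bounded_words (Suc N) (h ` A)"
    then obtain s a b where "s \<in> bounded_words N A" "a \<in> insert 0 A" "b \<in> insert 0 A"
      and "x = h s + h a - h b"
      unfolding bounded_words.simps Suc ins by blast
    then show "x \<in> h ` bounded_words (Suc N) A" by (auto simp: hom[symmetric])
  next
    fix x assume "x \<in> h ` bounded_words (Suc N) A"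
    then obtain s a b where "s \<in> bounded_words N A" "a \<in> insert 0 A" "b \<in> insert 0 A"
      and "x = h (s + a - b)"
      by auto
    moreover note hom
    ultimately show "x \<in> bounded_words (Suc N) (h ` A)"
      unfolding bounded_words.simps Suc ins by blast
  qed
qed

lemma group_closure_image:
  "Modules.additive h \<Longrightarrow> group_closure (h ` A) = h ` group_closure A"
  by (simp add: group_closure_eq_UN_bounded_words bounded_words_image image_UN)

lemma group_closure_mono:
  assumes "A \<subseteq> B"
  shows "group_closure A \<subseteq> group_closure B"
proof
  fix x assume "x \<in> group_closure A"
  then show "x \<in> group_closure B"
    by induction (use assms in \<open>auto intro: group_closure.intros\<close>)
qed

lemma compact_bounded_words:
  fixes A :: "'a::topological_ab_group_add set"
  assumes "compact A"
  shows "compact (bounded_words N A)"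
proof (induction N)
  case (Suc N)
  have "{s + a - b |s a b. s \<in> X \<and> a \<in> Y \<and> b \<in> Z} =
      (\<lambda>(s, a, b). s + a - b) ` (X \<times> Y \<times> Z)" for X Y Z :: "'a set"
    by force
  then have "bounded_words (Suc N) A =
      (\<lambda>(s, a, b). s + a - b) ` (bounded_words N A \<times> insert 0 A \<times> insert 0 A)"
    by (simp only: bounded_words.simps)
  moreover have "compact (bounded_words N A \<times> insert 0 A \<times> insert 0 A)"
    using Suc assms by (intro compact_Times compact_insert)
  moreover have "continuous_on UNIV (\<lambda>(s, a, b). s + a - (b::'a))"
    by (simp add: case_prod_unfold, intro continuous_intros)
  ultimately show ?case
    by (metis compact_continuous_image continuous_on_subset subset_UNIV)
qed simp

definition trunc :: "nat \<Rightarrow> (nat \<Rightarrow> 'a::zero) \<Rightarrow> nat \<Rightarrow> 'a" where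
  "trunc m x i = (if i < m then x i else 0)"

lemma additive_trunc: "Modules.additive (trunc m :: (nat \<Rightarrow> 'a::ab_group_add) \<Rightarrow> _)"
  by unfold_locales (auto simp: trunc_def)

lemma trunc_eq_nth_default: "trunc m x = nth_default 0 (map x [0..<m])"
  by (auto simp: trunc_def nth_default_def)

lemma mem_closed_if_truncations_agree:
  fixes S :: "(nat \<Rightarrow> 'a::{zero, first_countable_topology}) set"
  assumes "closed S" and approx: "\<And>m. \<exists>s\<in>S. trunc m s = trunc m x"
  shows "x \<in> S"
proof -
  from approx have "\<forall>m. \<exists>s. s \<in> S \<and> trunc m s = trunc m x" by blast
  from choice[OF this] obtain s where s: "\<And>m. s m \<in> S" "\<And>m. trunc m (s m) = trunc m x"
    by blast
  have "limitin euclidean (\<lambda>m. s m i) (x i) sequentially" for i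
  proof -
    have "s m i = x i" if "m > i" for m
      using fun_cong[OF s(2)[of m], of i] that by (simp add: trunc_def)
    then have "eventually (\<lambda>m. s m i = x i) sequentially"
      by (auto simp: eventually_sequentially intro!: exI[of _ "Suc i"])
    then show ?thesis by (simp add: tendsto_eventually)
  qed
  then have "limitin (product_topology (\<lambda>i. euclidean) UNIV) s x sequentially"
    by (simp add: limitin_componentwise)
  then have "s \<longlonglongrightarrow> x"
    by (simp add: euclidean_product_topology)
  with \<open>closed S\<close> s(1) show ?thesis
    by (rule closed_sequentially)
qed

lemma vimage_group_closure_eq_group_closure:
  fixes \<phi> :: "(nat \<Rightarrow> 'a::{topological_ab_group_add, t2_space, first_countable_topology})
    \<Rightarrow> 'b::ab_group_add"
  assumes \<phi>: "Modules.additive \<phi>"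
    and K: "compact K" "\<phi> ` K \<subseteq> U"
    and proj: "\<And>m. \<exists>\<pi>. Modules.additive \<pi> \<and> (\<forall>x. \<pi> (\<phi> x) = trunc m x) \<and>
      \<pi> ` U \<subseteq> insert 0 (trunc m ` K)"
  shows "\<phi> -` group_closure U = group_closure K"
proof (intro equalityI subsetI)
  fix x assume "x \<in> \<phi> -` group_closure U"
  then obtain N where N: "\<phi> x \<in> bounded_words N U"
    by (auto simp: group_closure_eq_UN_bounded_words)
  have approx: "\<exists>s\<in>bounded_words N K. trunc m s = trunc m x" for m
  proof -
    from proj[of m] obtain \<pi> where
      \<pi>: "Modules.additive \<pi>" "\<forall>x. \<pi> (\<phi> x) = trunc m x" "\<pi> ` U \<subseteq> insert 0 (trunc m ` K)"
      by blast
    have "trunc m x \<in> \<pi> ` bounded_words N U"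
      using N by (metis \<pi>(2) image_eqI)
    also have "\<dots> = bounded_words N (\<pi> ` U)"
      using \<pi>(1) by (rule bounded_words_image[symmetric])
    also have "\<dots> \<subseteq> bounded_words N (trunc m ` K)"
      using \<pi>(3) by (rule bounded_words_mono)
    also have "\<dots> = trunc m ` bounded_words N K"
      by (rule bounded_words_image[OF additive_trunc])
    finally show ?thesis by (auto simp: image_iff)
  qed
  have "closed (bounded_words N K)"
    by (rule compact_imp_closed_fun[OF compact_bounded_words[OF K(1)]])
  then have "x \<in> bounded_words N K"
    using approx by (rule mem_closed_if_truncations_agree)
  then show "x \<in> group_closure K"
    using bounded_words_subset_group_closure by blast
next
  fix x assume "x \<in> group_closure K"
  then have "\<phi> x \<in> group_closure (\<phi> ` K)"
    by (simp add: group_closure_image[OF \<phi>])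
  then show "x \<in> \<phi> -` group_closure U"
    using group_closure_mono[OF K(2)] by blast
qed

section \<open>A universal compact set\<close>

definition block :: "nat \<Rightarrow> (nat \<Rightarrow> 'a) \<Rightarrow> nat \<Rightarrow> 'a" where
  "block a y i = y (prod_encode (a, i))"

definition assemble :: "(nat \<Rightarrow> nat \<Rightarrow> 'a) \<Rightarrow> nat \<Rightarrow> 'a" where
  "assemble F n = (case prod_decode n of (a, i) \<Rightarrow> F a i)"

lemma block_assemble [simp]: "block a (assemble F) = F a"
  by (rule ext) (simp add: block_def assemble_def)

lemma continuous_on_block: "continuous_on UNIV (block a)"
  unfolding block_def by (intro continuous_on_coordinatewise_then_product) simp

lemma additive_block: "Modules.additive (block a :: (nat \<Rightarrow> 'a::ab_group_add) \<Rightarrow> _)"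
  by unfold_locales (simp add: block_def fun_eq_iff)

lemma compact_block_constrained:
  fixes S :: "nat \<Rightarrow> (nat \<Rightarrow> 'a::t2_space) set"
  assumes "\<And>a. finite (S a)"
  shows "compact {y. \<forall>a. block a y \<in> S a}"
proof -
  define Y where "Y = {y. \<forall>a. block a y \<in> S a}"
  define T where "T n = (\<lambda>z. z (snd (prod_decode n))) ` S (fst (prod_decode n))" for n
  have "Y \<subseteq> PiE UNIV T"
  proof
    fix y assume "y \<in> Y"
    have "y n \<in> T n" for n
    proof -
      obtain a i where n: "prod_decode n = (a, i)" by fastforce
      have "y n = block a y i"
        by (metis block_def n prod_decode_inverse)
      with \<open>y \<in> Y\<close> n show ?thesis by (auto simp: Y_def T_def)
    qed
    then show "y \<in> PiE UNIV T" by auto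
  qed
  moreover have "compact (PiE UNIV T)"
  proof -
    have "compactin (product_topology (\<lambda>i. euclidean) UNIV) (PiE UNIV T)"
      by (simp add: compactin_PiE T_def assms finite_imp_compact)
    then show ?thesis by (simp add: euclidean_product_topology)
  qed
  moreover have "closed Y"
  proof -
    have "closed (S a)" for a
      using assms by (intro compact_imp_closed_fun finite_imp_compact)
    moreover have "Y = (\<Inter>a. block a -` S a)" by (auto simp: Y_def)
    ultimately show ?thesis
      by (auto intro!: closed_INT closed_vimage continuous_on_block)
  qed
  ultimately show ?thesis
    unfolding Y_def[symmetric] by (metis compact_Int_closed inf.absorb2)
qed

text \<open>Via \<open>from_nat\<close>, a number c codes a finite list of finite sequences (as lists, padded with
  zeros by \<open>nth_default\<close>); block \<open>prod_encode (m, c)\<close> of a point of the universal set is 0 or one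
  of them. Only c matters here; m serves to give the truncations of level m their own block.\<close>

definition universal_block :: "nat \<Rightarrow> (nat \<Rightarrow> 'a::{countable, zero}) set" where
  "universal_block c = insert 0 (nth_default 0 ` set (from_nat c))"

definition universal_set :: "(nat \<Rightarrow> 'a::{countable, zero}) set" where
  "universal_set = {y. \<forall>a. block a y \<in> universal_block (snd (prod_decode a))}"

lemma compact_universal_set:
  "compact (universal_set :: (nat \<Rightarrow> 'a::{countable, zero, t2_space}) set)"
  unfolding universal_set_def universal_block_def
  by (rule compact_block_constrained) simp

lemma finite_if_compact_discrete:
  fixes S :: "'a::discrete_topology set"
  assumes "compact S"
  shows "finite S"
proof -
  obtain T where "T \<subseteq> S" "finite T" "S \<subseteq> (\<Union>x\<in>T. {x})"
    by (rule compactE_image[OF assms, of S "\<lambda>x. {x}"]) (auto simp: open_discrete)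
  then show ?thesis by (metis UN_singleton finite_subset)
qed

lemma finite_prefixes_if_compact:
  fixes K :: "(nat \<Rightarrow> 'a::discrete_topology) set"
  assumes "compact K"
  shows "finite ((\<lambda>k. map k [0..<m]) ` K)"
proof -
  define A where "A = (\<Union>i<m. (\<lambda>k. k i) ` K)"
  have "compact ((\<lambda>k. k i) ` K)" for i
    by (intro compact_continuous_image assms
        continuous_on_subset[OF continuous_on_product_coordinates]) simp
  then have "finite A"
    unfolding A_def by (blast intro: finite_if_compact_discrete)
  moreover have "(\<lambda>k. map k [0..<m]) ` K \<subseteq> {xs. set xs \<subseteq> A \<and> length xs = m}"
    unfolding A_def by fastforce
  ultimately show ?thesis
    using finite_lists_length_eq finite_subset by blast
qed

definition truncation_code :: "(nat \<Rightarrow> 'a::countable) set \<Rightarrow> nat \<Rightarrow> nat" where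
  "truncation_code K m = to_nat (SOME L. set L = (\<lambda>k. map k [0..<m]) ` K)"

lemma universal_block_truncation_code:
  fixes K :: "(nat \<Rightarrow> 'a::{countable, discrete_topology, zero}) set"
  assumes "compact K"
  shows "universal_block (truncation_code K m) = insert 0 (trunc m ` K)"
proof -
  have "\<exists>L. set L = (\<lambda>k. map k [0..<m]) ` K"
    using finite_list[OF finite_prefixes_if_compact[OF assms]] .
  then have "set (SOME L. set L = (\<lambda>k. map k [0..<m]) ` K) = (\<lambda>k. map k [0..<m]) ` K"
    by (rule someI_ex)
  then have "set (from_nat (truncation_code K m)) = (\<lambda>k. map k [0..<m]) ` K"
    by (simp add: truncation_code_def)
  then show ?thesis
    by (simp add: universal_block_def image_image trunc_eq_nth_default)
qed

definition truncation_embedding :: "(nat \<Rightarrow> nat) \<Rightarrow> (nat \<Rightarrow> 'a::zero) \<Rightarrow> nat \<Rightarrow> 'a" where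
  "truncation_embedding code x =
     assemble (\<lambda>a. case prod_decode a of (m, c) \<Rightarrow> if c = code m then trunc m x else 0)"

lemma block_truncation_embedding:
  "block (prod_encode (m, c)) (truncation_embedding code x) = (if c = code m then trunc m x else 0)"
  by (simp add: truncation_embedding_def)

lemma additive_truncation_embedding:
  "Modules.additive (truncation_embedding code :: (nat \<Rightarrow> 'a::ab_group_add) \<Rightarrow> _)"
  by unfold_locales
    (simp add: truncation_embedding_def assemble_def trunc_def fun_eq_iff split: prod.split)

lemma continuous_on_truncation_embedding: "continuous_on UNIV (truncation_embedding code)"
proof (intro continuous_on_coordinatewise_then_product)
  fix n
  obtain a i where n: "prod_decode n = (a, i)" by fastforce
  obtain m c where a: "prod_decode a = (m, c)" by fastforce
  have coordinate: "truncation_embedding code x n = (if c = code m \<and> i < m then x i else 0)"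
    for x
    by (simp add: truncation_embedding_def assemble_def trunc_def n a)
  show "continuous_on UNIV (\<lambda>x. truncation_embedding code x n)"
    unfolding coordinate by (cases "c = code m"; cases "i < m") (simp_all add: continuous_on_const)
qed

lemma truncation_embedding_in_universal_set:
  fixes K :: "(nat \<Rightarrow> 'a::{countable, discrete_topology, zero}) set"
  assumes "compact K" "k \<in> K"
  shows "truncation_embedding (truncation_code K) k \<in> universal_set"
  unfolding universal_set_def
proof (intro CollectI allI)
  fix a :: nat
  obtain m c where a: "a = prod_encode (m, c)"
    by (metis prod_decode_inverse surj_pair)
  show "block a (truncation_embedding (truncation_code K) k)
      \<in> universal_block (snd (prod_decode a))"
    using assms by (simp add: a block_truncation_embedding universal_block_truncation_code)
      (simp add: universal_block_def)
qed

lemma vimage_universal_group_closure: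
  fixes K :: "(nat \<Rightarrow> 'a::{countable, discrete_topology, topological_ab_group_add}) set"
  assumes "compact K"
  shows "truncation_embedding (truncation_code K) -` group_closure universal_set = group_closure K"
proof (rule vimage_group_closure_eq_group_closure)
  show "truncation_embedding (truncation_code K) ` K \<subseteq> universal_set"
    using truncation_embedding_in_universal_set[OF assms] by blast
  fix m
  let ?\<pi> = "block (prod_encode (m, truncation_code K m)) :: (nat \<Rightarrow> 'a) \<Rightarrow> _"
  have "?\<pi> y \<in> insert 0 (trunc m ` K)" if "y \<in> universal_set" for y
  proof -
    from that have
      "?\<pi> y \<in> universal_block (snd (prod_decode (prod_encode (m, truncation_code K m))))"
      unfolding universal_set_def by blast
    then show ?thesis by (simp add: universal_block_truncation_code[OF assms])
  qed
  then show "\<exists>\<pi>. Modules.additive \<pi> \<and>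
      (\<forall>x. \<pi> (truncation_embedding (truncation_code K) x) = trunc m x) \<and>
      \<pi> ` universal_set \<subseteq> insert 0 (trunc m ` K)"
    by (intro exI[of _ ?\<pi>]) (auto simp: additive_block block_truncation_embedding)
qed (use assms additive_truncation_embedding in auto)

theorem mainTheorem9:
  shows "\<exists>H0. compactly_generated H0 \<and>
    (\<forall>H. compactly_generated H \<longrightarrow>
      (\<exists>\<phi> :: (nat \<Rightarrow> int) \<Rightarrow> (nat \<Rightarrow> int).
         continuous_on UNIV \<phi> \<and> (\<forall>x y. \<phi> (x + y) = \<phi> x + \<phi> y) \<and> \<phi> -` H0 = H))"
proof (intro exI[of _ "group_closure universal_set"] conjI allI impI)
  show "compactly_generated (group_closure (universal_set :: (nat \<Rightarrow> int) set))"
    unfolding compactly_generated_def using compact_universal_set by blast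
  fix H :: "(nat \<Rightarrow> int) set"
  assume "compactly_generated H"
  then obtain K where K: "compact K" "H = group_closure K"
    unfolding compactly_generated_def by blast
  let ?\<phi> = "truncation_embedding (truncation_code K) :: (nat \<Rightarrow> int) \<Rightarrow> _"
  have "continuous_on UNIV ?\<phi>" "\<forall>x y. ?\<phi> (x + y) = ?\<phi> x + ?\<phi> y"
    "?\<phi> -` group_closure universal_set = H"
    using continuous_on_truncation_embedding additive.add[OF additive_truncation_embedding]
      vimage_universal_group_closure[OF K(1)] K(2)
    by auto
  then show "\<exists>\<phi> :: (nat \<Rightarrow> int) \<Rightarrow> (nat \<Rightarrow> int). continuous_on UNIV \<phi> \<and>
      (\<forall>x y. \<phi> (x + y) = \<phi> x + \<phi> y) \<and> \<phi> -` group_closure universal_set = H"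
    by blast
qed

end
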